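(* Let $\Phi=\forall u_1\ldots\forall u_n\exists e_1(D_1)\ldots\exists e_m(D_m).\varphi$ be a DQBF, let $A$ be a set of arbiter variables with arbiter clauses $\varphi_A$, let $\tau$ be a (partial) assignment to $A$, and let $\rho\in[U]$. Then $\varphi\wedge\varphi_A\wedge\tau\wedge\rho$ and $\varphi^\rho\wedge\tau^\rho$ are equisatisfiable.
   Context: For a set $V$ of variables, $[V]$ is the set of assignments $V\to\{\textsc{true},\textsc{false}\}$; an assignment is identified with the term (conjunction) of the literals it makes true, $\neg\sigma$ denotes the clause consisting of the negations of these literals, and $\sigma|_W$ denotes restriction. A DQBF is $\Phi=\forall u_1\ldots\forall u_n\exists e_1(D_1)\ldots\exists e_m(D_m).\varphi$ with pairwise distinct variables, $U=\{u_i\}$, $E=\{e_j\}$, dependency sets $D(e_j)=D_j\subseteq U$, and $\varphi$ a CNF over $U\cup E$. Arbiter variables: for $e\in E$ and $\sigma\in[D(e)]$, $e^\sigma$ is a fresh propositional variable (different annotations give different variables); for a literal $\ell$ on $e$, $\ell^\sigma$ is the literal on $e^\sigma$ of the same polarity. For a set $A$ of arbiter variables, the arbiter clauses are $\varphi_A=\bigwedge_{e^\sigma\in A}\big((e^\sigma\vee\neg\sigma\vee\neg e)\wedge(\neg e^\sigma\vee\neg\sigma\vee e)\big)$. For a partial assignment $\tau$ of $A$ (viewed as a set of arbiter literals) and $\rho\in[U]$, let $\tau^\rho=\{\ell^\sigma\in\tau\mid \rho\models\sigma\}$. For $\rho\in[U]$, the instantiation of $\varphi$ by $\rho$ is the CNF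 $\varphi^\rho=\{\{x^{\rho|_{D(\mathit{var}(x))}}\mid x\in C,\ \mathit{var}(x)\in E\}\mid C\in\varphi,\ \text{no universal literal of } C \text{ is satisfied by }\rho\}$, whose variables $e^{\rho|_{D(e)}}$ are identified with the arbiter variables of the same name. *)

theory Defs
  imports Main
begin

text \<open>Propositional variables: universal variables, existential variables, and
arbiter variables e^sigma where sigma is an assignment of D(e), represented as a
partial map with domain D(e).\<close>
datatype ('u, 'e) var = UVar 'u | EVar 'e | Arb 'e "'u \<rightharpoonup> bool"

type_synonym ('u, 'e) lit = "('u, 'e) var \<times> bool"
type_synonym ('u, 'e) clause = "('u, 'e) lit set"
type_synonym ('u, 'e) cnf = "('u, 'e) clause set"

definition lit_sat :: "(('u, 'e) var \<Rightarrow> bool) \<Rightarrow> ('u, 'e) lit \<Rightarrow> bool" where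
  "lit_sat \<alpha> l \<longleftrightarrow> \<alpha> (fst l) = snd l"

definition cnf_sat :: "(('u, 'e) var \<Rightarrow> bool) \<Rightarrow> ('u, 'e) cnf \<Rightarrow> bool" where
  "cnf_sat \<alpha> F \<longleftrightarrow> (\<forall>C\<in>F. \<exists>l\<in>C. lit_sat \<alpha> l)"

definition satisfiable :: "('u, 'e) cnf \<Rightarrow> bool" where
  "satisfiable F \<longleftrightarrow> (\<exists>\<alpha>. cnf_sat \<alpha> F)"

definition equisat :: "('u, 'e) cnf \<Rightarrow> ('u, 'e) cnf \<Rightarrow> bool" where
  "equisat F G \<longleftrightarrow> (satisfiable F \<longleftrightarrow> satisfiable G)"

definition assignments :: "'u set \<Rightarrow> ('u \<rightharpoonup> bool) set" where
  "assignments W = {\<sigma>. dom \<sigma> = W}"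

definition restr :: "('u \<Rightarrow> bool) \<Rightarrow> 'u set \<Rightarrow> ('u \<rightharpoonup> bool)" where
  "restr \<rho> W = (\<lambda>u. if u \<in> W then Some (\<rho> u) else None)"

definition models_term :: "('u \<Rightarrow> bool) \<Rightarrow> ('u \<rightharpoonup> bool) \<Rightarrow> bool" where
  "models_term \<rho> \<sigma> \<longleftrightarrow> (\<forall>u b. \<sigma> u = Some b \<longrightarrow> \<rho> u = b)"

definition neg_term :: "('u \<rightharpoonup> bool) \<Rightarrow> ('u, 'e) clause" where
  "neg_term \<sigma> = {(UVar u, \<not> b) | u b. \<sigma> u = Some b}"

definition is_arbiter_var :: "('e \<Rightarrow> 'u set) \<Rightarrow> 'e set \<Rightarrow> ('u, 'e) var \<Rightarrow> bool" where
  "is_arbiter_var D E x \<longleftrightarrow> (\<exists>e \<sigma>. x = Arb e \<sigma> \<and> e \<in> E \<and> \<sigma> \<in> assignments (D e))"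

definition dqbf :: "'u set \<Rightarrow> 'e set \<Rightarrow> ('e \<Rightarrow> 'u set) \<Rightarrow> ('u, 'e) cnf \<Rightarrow> bool" where
  "dqbf U E D \<phi> \<longleftrightarrow> finite U \<and> finite E \<and> finite \<phi> \<and> (\<forall>C\<in>\<phi>. finite C) \<and>
     (\<forall>e\<in>E. D e \<subseteq> U) \<and>
     (\<forall>C\<in>\<phi>. \<forall>(x, b)\<in>C. (\<exists>u\<in>U. x = UVar u) \<or> (\<exists>e\<in>E. x = EVar e))"

definition arbiter_clauses :: "('u, 'e) var set \<Rightarrow> ('u, 'e) cnf" where
  "arbiter_clauses A =
     (\<Union>e. \<Union>\<sigma>. if Arb e \<sigma> \<in> A then
        {insert (Arb e \<sigma>, True) (insert (EVar e, False) (neg_term \<sigma>)),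
         insert (Arb e \<sigma>, False) (insert (EVar e, True) (neg_term \<sigma>))}
      else {})"

definition partial_assignment :: "('u, 'e) var set \<Rightarrow> ('u, 'e) lit set \<Rightarrow> bool" where
  "partial_assignment A \<tau> \<longleftrightarrow> (\<forall>(x, b)\<in>\<tau>. x \<in> A) \<and>
     (\<forall>x b. (x, b) \<in> \<tau> \<longrightarrow> (x, \<not> b) \<notin> \<tau>)"

definition units :: "('u, 'e) lit set \<Rightarrow> ('u, 'e) cnf" where
  "units L = {{l} | l. l \<in> L}"

definition univ_term :: "'u set \<Rightarrow> ('u \<Rightarrow> bool) \<Rightarrow> ('u, 'e) lit set" where
  "univ_term U \<rho> = {(UVar u, \<rho> u) | u. u \<in> U}"

definition tau_restr :: "('u, 'e) lit set \<Rightarrow> ('u \<Rightarrow> bool) \<Rightarrow> ('u, 'e) lit set" where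
  "tau_restr \<tau> \<rho> = {(Arb e \<sigma>, b) | e \<sigma> b. (Arb e \<sigma>, b) \<in> \<tau> \<and> models_term \<rho> \<sigma>}"

definition instantiate :: "('e \<Rightarrow> 'u set) \<Rightarrow> ('u, 'e) cnf \<Rightarrow> ('u \<Rightarrow> bool) \<Rightarrow> ('u, 'e) cnf" where
  "instantiate D \<phi> \<rho> =
     {{(Arb e (restr \<rho> (D e)), b) | e b. (EVar e, b) \<in> C} | C.
        C \<in> \<phi> \<and> \<not> (\<exists>u b. (UVar u, b) \<in> C \<and> \<rho> u = b)}"

end

theory Submission
  imports Defs
begin

text \<open>The arbiter clauses of \<open>e\<^sup>\<sigma>\<close> contain \<open>\<not>\<sigma>\<close>, so under \<open>\<rho>\<close> they are
satisfied outright unless \<open>\<rho> \<Turnstile> \<sigma>\<close>, and then they say exactly \<open>e\<^sup>\<sigma> \<leftrightarrow> e\<close>; for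
\<open>\<sigma> \<in> [D(e)]\<close> this happens only for \<open>\<sigma> = \<rho>|D(e)\<close>. Hence a model of
\<open>\<phi> \<and> \<phi>\<^sub>A \<and> \<tau> \<and> \<rho>\<close> gives a model of \<open>\<phi>\<^sup>\<rho> \<and> \<tau>\<^sup>\<rho>\<close> by reading each \<open>e^(\<rho>|D(e))\<close>
off \<open>e\<close>; conversely a model of \<open>\<phi>\<^sup>\<rho> \<and> \<tau>\<^sup>\<rho>\<close> extends to one of \<open>\<phi> \<and> \<phi>\<^sub>A \<and> \<tau> \<and> \<rho>\<close> by
setting the universals to \<open>\<rho>\<close>, each \<open>e\<close> to \<open>e^(\<rho>|D(e))\<close>, and the arbiters not selected
by \<open>\<rho>\<close> as the consistent \<open>\<tau>\<close> prescribes. In both directions a clause of \<open>\<phi>\<close> whose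
universal part \<open>\<rho>\<close> falsifies is satisfied exactly when its instance in \<open>\<phi>\<^sup>\<rho>\<close> is.\<close>

lemma cnf_sat_Un [simp]: "cnf_sat \<alpha> (F \<union> G) \<longleftrightarrow> cnf_sat \<alpha> F \<and> cnf_sat \<alpha> G"
  unfolding cnf_sat_def by blast

lemma cnf_sat_units: "cnf_sat \<alpha> (units L) \<longleftrightarrow> (\<forall>l\<in>L. lit_sat \<alpha> l)"
  unfolding cnf_sat_def units_def by blast

lemma cnf_sat_units_univ_term:
  "cnf_sat \<alpha> (units (univ_term U \<rho>)) \<longleftrightarrow> (\<forall>u\<in>U. \<alpha> (UVar u) = \<rho> u)"
  unfolding cnf_sat_units univ_term_def lit_sat_def by auto

lemma models_term_iff_eq_restr:
  assumes "dom \<sigma> = W"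
  shows "models_term \<rho> \<sigma> \<longleftrightarrow> \<sigma> = restr \<rho> W"
proof
  assume "models_term \<rho> \<sigma>"
  show "\<sigma> = restr \<rho> W"
  proof
    fix u show "\<sigma> u = restr \<rho> W u"
      using assms \<open>models_term \<rho> \<sigma>\<close> unfolding restr_def models_term_def by (cases "\<sigma> u") auto
  qed
qed (use assms in \<open>auto simp: models_term_def restr_def split: if_splits\<close>)

lemma models_term_cong:
  "(\<And>u. u \<in> dom \<sigma> \<Longrightarrow> \<rho> u = \<rho>' u) \<Longrightarrow> models_term \<rho> \<sigma> \<longleftrightarrow> models_term \<rho>' \<sigma>"
  unfolding models_term_def by (metis domI)

lemma neg_term_sat_iff:
  "(\<exists>l\<in>neg_term \<sigma>. lit_sat \<alpha> l) \<longleftrightarrow> \<not> models_term (\<lambda>u. \<alpha> (UVar u)) \<sigma>"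
  unfolding neg_term_def models_term_def lit_sat_def by auto

lemma cnf_sat_arbiter_clauses:
  "cnf_sat \<alpha> (arbiter_clauses A) \<longleftrightarrow>
     (\<forall>e \<sigma>. Arb e \<sigma> \<in> A \<longrightarrow> models_term (\<lambda>u. \<alpha> (UVar u)) \<sigma> \<longrightarrow> \<alpha> (Arb e \<sigma>) = \<alpha> (EVar e))"
proof -
  have "(\<forall>C\<in>{insert (Arb e \<sigma>, True) (insert (EVar e, False) (neg_term \<sigma>)),
               insert (Arb e \<sigma>, False) (insert (EVar e, True) (neg_term \<sigma>))}.
           \<exists>l\<in>C. lit_sat \<alpha> l)
        \<longleftrightarrow> (models_term (\<lambda>u. \<alpha> (UVar u)) \<sigma> \<longrightarrow> \<alpha> (Arb e \<sigma>) = \<alpha> (EVar e))" for e \<sigma>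
    using neg_term_sat_iff[of \<sigma> \<alpha>] unfolding lit_sat_def by auto
  then show ?thesis
    unfolding cnf_sat_def arbiter_clauses_def by (auto split: if_splits)
qed

definition instantiate_clause :: "('e \<Rightarrow> 'u set) \<Rightarrow> ('u \<Rightarrow> bool) \<Rightarrow> ('u, 'e) clause \<Rightarrow> ('u, 'e) clause" where
  "instantiate_clause D \<rho> C = {(Arb e (restr \<rho> (D e)), b) | e b. (EVar e, b) \<in> C}"

lemma instantiate_eq_image:
  "instantiate D \<phi> \<rho> = instantiate_clause D \<rho> ` {C \<in> \<phi>. \<not> (\<exists>u b. (UVar u, b) \<in> C \<and> \<rho> u = b)}"
  unfolding instantiate_def instantiate_clause_def by blast

lemma cnf_sat_instantiate_iff:
  "cnf_sat \<beta> (instantiate D \<phi> \<rho>) \<longleftrightarrow>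
     (\<forall>C\<in>\<phi>. (\<exists>u b. (UVar u, b) \<in> C \<and> \<rho> u = b) \<or>
        (\<exists>e b. (EVar e, b) \<in> C \<and> \<beta> (Arb e (restr \<rho> (D e))) = b))"
  unfolding instantiate_eq_image cnf_sat_def instantiate_clause_def lit_sat_def by auto

lemma clause_sat_iff_instance_sat:
  assumes lit: "\<And>x b. (x, b) \<in> C \<Longrightarrow>
      (\<exists>u. x = UVar u \<and> \<alpha> x = \<rho> u) \<or> (\<exists>e. x = EVar e \<and> \<alpha> x = \<beta> (Arb e (restr \<rho> (D e))))"
  shows "(\<exists>l\<in>C. lit_sat \<alpha> l) \<longleftrightarrow>
     (\<exists>u b. (UVar u, b) \<in> C \<and> \<rho> u = b) \<or> (\<exists>e b. (EVar e, b) \<in> C \<and> \<beta> (Arb e (restr \<rho> (D e))) = b)"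
proof
  assume "\<exists>l\<in>C. lit_sat \<alpha> l"
  then obtain x b where "(x, b) \<in> C" "\<alpha> x = b"
    unfolding lit_sat_def by auto
  with lit show "(\<exists>u b. (UVar u, b) \<in> C \<and> \<rho> u = b) \<or>
      (\<exists>e b. (EVar e, b) \<in> C \<and> \<beta> (Arb e (restr \<rho> (D e))) = b)"
    by blast
next
  assume "(\<exists>u b. (UVar u, b) \<in> C \<and> \<rho> u = b) \<or>
      (\<exists>e b. (EVar e, b) \<in> C \<and> \<beta> (Arb e (restr \<rho> (D e))) = b)"
  then show "\<exists>l\<in>C. lit_sat \<alpha> l"
  proof (elim disjE exE conjE)
    fix u b assume "(UVar u, b) \<in> C" and "\<rho> u = b"
    with lit have "lit_sat \<alpha> (UVar u, b)"
      unfolding lit_sat_def by auto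
    with \<open>(UVar u, b) \<in> C\<close> show ?thesis ..
  next
    fix e b assume "(EVar e, b) \<in> C" and "\<beta> (Arb e (restr \<rho> (D e))) = b"
    with lit have "lit_sat \<alpha> (EVar e, b)"
      unfolding lit_sat_def by auto
    with \<open>(EVar e, b) \<in> C\<close> show ?thesis ..
  qed
qed

lemma cnf_sat_iff_cnf_sat_instantiate:
  assumes "\<And>C x b. C \<in> \<phi> \<Longrightarrow> (x, b) \<in> C \<Longrightarrow>
      (\<exists>u. x = UVar u \<and> \<alpha> x = \<rho> u) \<or> (\<exists>e. x = EVar e \<and> \<alpha> x = \<beta> (Arb e (restr \<rho> (D e))))"
  shows "cnf_sat \<alpha> \<phi> \<longleftrightarrow> cnf_sat \<beta> (instantiate D \<phi> \<rho>)"
  unfolding cnf_sat_instantiate_iff cnf_sat_def[of \<alpha>]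
proof (rule ball_cong[OF refl])
  fix C assume "C \<in> \<phi>"
  from assms[OF this] show "(\<exists>l\<in>C. lit_sat \<alpha> l) \<longleftrightarrow>
      (\<exists>u b. (UVar u, b) \<in> C \<and> \<rho> u = b) \<or> (\<exists>e b. (EVar e, b) \<in> C \<and> \<beta> (Arb e (restr \<rho> (D e))) = b)"
    by (rule clause_sat_iff_instance_sat)
qed

lemma dqbf_matrix_litD:
  assumes "dqbf U E D \<phi>" and "C \<in> \<phi>" and "(x, b) \<in> C"
  shows "(\<exists>u\<in>U. x = UVar u) \<or> (\<exists>e\<in>E. x = EVar e)"
  using assms unfolding dqbf_def by blast

lemma dqbf_dependenciesD:
  assumes "dqbf U E D \<phi>" and "e \<in> E"
  shows "D e \<subseteq> U"
  using assms unfolding dqbf_def by blast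

lemma arbiter_var_ArbD:
  assumes "\<forall>x\<in>A. is_arbiter_var D E x" and "Arb e \<sigma> \<in> A"
  shows "e \<in> E" and "dom \<sigma> = D e"
  using assms unfolding is_arbiter_var_def assignments_def by fastforce+

lemma partial_assignment_lit_value:
  assumes "partial_assignment A \<tau>" and "(x, b) \<in> \<tau>"
  shows "b = ((x, True) \<in> \<tau>)"
proof (cases b)
  case False
  with assms(2) have "(x, False) \<in> \<tau>" by simp
  with assms(1) have "(x, \<not> False) \<notin> \<tau>"
    unfolding partial_assignment_def by blast
  with False show ?thesis by simp
qed (use assms(2) in simp)

lemma satisfiable_instantiate_if_cnf_sat_arbiter_clauses:
  assumes "dqbf U E D \<phi>"
    and "\<forall>x\<in>A. is_arbiter_var D E x"
    and "partial_assignment A \<tau>"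
    and sat: "cnf_sat \<alpha> (\<phi> \<union> arbiter_clauses A \<union> units \<tau> \<union> units (univ_term U \<rho>))"
  shows "satisfiable (instantiate D \<phi> \<rho> \<union> units (tau_restr \<tau> \<rho>))"
proof -
  define \<beta> where "\<beta> x = (case x of
      Arb e \<sigma> \<Rightarrow> if \<sigma> = restr \<rho> (D e) then \<alpha> (EVar e) else \<alpha> x
    | _ \<Rightarrow> \<alpha> x)" for x
  have univ: "\<alpha> (UVar u) = \<rho> u" if "u \<in> U" for u
    using sat that by (simp add: cnf_sat_units_univ_term)
  have "cnf_sat \<beta> (instantiate D \<phi> \<rho>)"
  proof -
    have "(\<exists>u. x = UVar u \<and> \<alpha> x = \<rho> u) \<or> (\<exists>e. x = EVar e \<and> \<alpha> x = \<beta> (Arb e (restr \<rho> (D e))))"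
      if "C \<in> \<phi>" "(x, b) \<in> C" for C x b
      using dqbf_matrix_litD[OF assms(1) that] univ unfolding \<beta>_def by auto
    from cnf_sat_iff_cnf_sat_instantiate[OF this] sat show ?thesis
      by simp
  qed
  moreover have "lit_sat \<beta> (Arb e \<sigma>, b)" if "(Arb e \<sigma>, b) \<in> \<tau>" "models_term \<rho> \<sigma>" for e \<sigma> b
  proof -
    have "Arb e \<sigma> \<in> A"
      using assms(3) that(1) unfolding partial_assignment_def by blast
    then have dom: "dom \<sigma> = D e" and "D e \<subseteq> U"
      using arbiter_var_ArbD[OF assms(2)] dqbf_dependenciesD[OF assms(1)] by auto
    have "\<alpha> (UVar u) = \<rho> u" if "u \<in> dom \<sigma>" for u
      using that dom \<open>D e \<subseteq> U\<close> univ by blast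
    then have "models_term (\<lambda>u. \<alpha> (UVar u)) \<sigma> \<longleftrightarrow> models_term \<rho> \<sigma>"
      by (rule models_term_cong)
    with that(2) have "models_term (\<lambda>u. \<alpha> (UVar u)) \<sigma>"
      by simp
    then have "\<alpha> (Arb e \<sigma>) = \<alpha> (EVar e)"
      using sat \<open>Arb e \<sigma> \<in> A\<close> by (simp add: cnf_sat_arbiter_clauses)
    moreover have "lit_sat \<alpha> (Arb e \<sigma>, b)"
      using sat that(1) by (simp add: cnf_sat_units)
    moreover have "\<sigma> = restr \<rho> (D e)"
      using that(2) dom models_term_iff_eq_restr by blast
    ultimately show ?thesis
      unfolding lit_sat_def \<beta>_def by simp
  qed
  then have "cnf_sat \<beta> (units (tau_restr \<tau> \<rho>))"
    unfolding cnf_sat_units tau_restr_def by blast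
  ultimately show ?thesis
    unfolding satisfiable_def by auto
qed

lemma satisfiable_arbiter_clauses_if_cnf_sat_instantiate:
  assumes "dqbf U E D \<phi>"
    and "\<forall>x\<in>A. is_arbiter_var D E x"
    and "partial_assignment A \<tau>"
    and sat: "cnf_sat \<beta> (instantiate D \<phi> \<rho> \<union> units (tau_restr \<tau> \<rho>))"
  shows "satisfiable (\<phi> \<union> arbiter_clauses A \<union> units \<tau> \<union> units (univ_term U \<rho>))"
proof -
  define \<alpha> where "\<alpha> x = (case x of
      UVar u \<Rightarrow> \<rho> u
    | EVar e \<Rightarrow> \<beta> (Arb e (restr \<rho> (D e)))
    | Arb e \<sigma> \<Rightarrow> if models_term \<rho> \<sigma> then \<beta> (Arb e \<sigma>) else (Arb e \<sigma>, True) \<in> \<tau>)" for x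
  have "cnf_sat \<alpha> \<phi>"
  proof -
    have "(\<exists>u. x = UVar u \<and> \<alpha> x = \<rho> u) \<or> (\<exists>e. x = EVar e \<and> \<alpha> x = \<beta> (Arb e (restr \<rho> (D e))))"
      if "C \<in> \<phi>" "(x, b) \<in> C" for C x b
      using dqbf_matrix_litD[OF assms(1) that] unfolding \<alpha>_def by auto
    from cnf_sat_iff_cnf_sat_instantiate[OF this] sat show ?thesis
      by simp
  qed
  moreover have "cnf_sat \<alpha> (arbiter_clauses A)"
    unfolding cnf_sat_arbiter_clauses
  proof (intro allI impI)
    fix e \<sigma> assume "Arb e \<sigma> \<in> A" and "models_term (\<lambda>u. \<alpha> (UVar u)) \<sigma>"
    then have "dom \<sigma> = D e" and "models_term \<rho> \<sigma>"
      using arbiter_var_ArbD[OF assms(2)] unfolding \<alpha>_def by auto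
    moreover from this have "\<sigma> = restr \<rho> (D e)"
      using models_term_iff_eq_restr by blast
    ultimately show "\<alpha> (Arb e \<sigma>) = \<alpha> (EVar e)"
      unfolding \<alpha>_def by simp
  qed
  moreover have "lit_sat \<alpha> l" if "l \<in> \<tau>" for l
  proof -
    obtain e \<sigma> b where l: "l = (Arb e \<sigma>, b)"
      using assms(2,3) \<open>l \<in> \<tau>\<close> unfolding partial_assignment_def is_arbiter_var_def by fast
    show ?thesis
    proof (cases "models_term \<rho> \<sigma>")
      case True
      then have "l \<in> tau_restr \<tau> \<rho>"
        using \<open>l \<in> \<tau>\<close> l unfolding tau_restr_def by blast
      with sat have "lit_sat \<beta> l"
        by (simp add: cnf_sat_units)
      with True l show ?thesis
        by (simp add: lit_sat_def \<alpha>_def)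
    next
      case False
      then show ?thesis
        using partial_assignment_lit_value[OF assms(3)] \<open>l \<in> \<tau>\<close> l
        by (simp add: lit_sat_def \<alpha>_def)
    qed
  qed
  moreover have "cnf_sat \<alpha> (units (univ_term U \<rho>))"
    by (simp add: cnf_sat_units_univ_term \<alpha>_def)
  ultimately have "cnf_sat \<alpha> (\<phi> \<union> arbiter_clauses A \<union> units \<tau> \<union> units (univ_term U \<rho>))"
    by (simp add: cnf_sat_units)
  then show ?thesis
    unfolding satisfiable_def by blast
qed

theorem lemma4:
  fixes U :: "'u set" and E :: "'e set" and D :: "'e \<Rightarrow> 'u set"
    and \<phi> :: "('u, 'e) cnf" and A :: "('u, 'e) var set"
    and \<tau> :: "('u, 'e) lit set" and \<rho> :: "'u \<Rightarrow> bool"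
  assumes "dqbf U E D \<phi>"
    and "\<forall>x\<in>A. is_arbiter_var D E x"
    and "partial_assignment A \<tau>"
  shows "equisat (\<phi> \<union> arbiter_clauses A \<union> units \<tau> \<union> units (univ_term U \<rho>))
                 (instantiate D \<phi> \<rho> \<union> units (tau_restr \<tau> \<rho>))"
  using satisfiable_instantiate_if_cnf_sat_arbiter_clauses[OF assms]
    satisfiable_arbiter_clauses_if_cnf_sat_instantiate[OF assms]
  unfolding equisat_def satisfiable_def by blast

end
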